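(* For every integer $k\ge2$ there is no integer $m\ge3$ with $S_{\mathbb{R}}(m-1,k)=m^k$; equivalently, $F_k(m)\neq0$ for all integers $k\ge2$ and $m\ge3$.
   Context: For an integer $k\ge1$ and real $m$, define $S_{\mathbb{R}}(m-1,k)=\dfrac{(m-1)^{k+1}-1}{k+1}+\dfrac{1+(m-1)^k}{2}$ (the Euler–MacLaurin approximation of $\sum_{i=1}^{m-1}i^k$ with all Bernoulli correction terms omitted), and $F_k(m)=2(k+1)\big(S_{\mathbb{R}}(m-1,k)-m^k\big)=2(m-1)^{k+1}+(k+1)(m-1)^k-2(k+1)m^k+(k-1)$. *)

theory Defs
  imports Complex_Main
begin

text \<open>Euler--MacLaurin approximation of the power sum with Bernoulli corrections omitted:
  S_R(x,k) = (x^(k+1) - 1)/(k+1) + (1 + x^k)/2, evaluated at real x.\<close>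
definition S_R :: "real \<Rightarrow> nat \<Rightarrow> real" where
  "S_R x k = (x ^ (k + 1) - 1) / real (k + 1) + (1 + x ^ k) / 2"

end

theory Submission
  imports Defs
begin

text \<open>Write \<open>n = m - 1\<close>, so that \<open>F k m = 0\<close> reads
  \<open>2 n^(k+1) + (k+1) n^k + (k-1) = 2 (k+1) (n+1)^k\<close>.  Modulo \<open>n\<close> this gives \<open>n dvd k + 3\<close>.
  For \<open>k \<ge> 9\<close>, bounding \<open>(n+1)^k\<close> below by its first three binomial terms makes the right-hand
  side strictly larger whenever \<open>n \<le> k + 3\<close>; the finitely many cases \<open>k \<le> 8\<close>, \<open>n \<le> 11\<close>
  are checked directly.\<close>

definition F :: "nat \<Rightarrow> int \<Rightarrow> int" where
  "F k m = 2 * (m - 1) ^ (k + 1) + (int k + 1) * (m - 1) ^ k - 2 * (int k + 1) * m ^ k + (int k - 1)"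

lemma of_int_F:
  "real_of_int (F k m) = 2 * (real k + 1) * (S_R (real_of_int m - 1) k - real_of_int m ^ k)"
  by (simp add: F_def S_R_def field_simps)

lemma dvd_F_add:
  assumes "k \<ge> 1"
  shows "m - 1 dvd F k m + (int k + 3)"
proof -
  have "F k m + (int k + 3)
      = (m - 1) * (2 * (m - 1) ^ k + (int k + 1) * (m - 1) ^ (k - 1)) - 2 * (int k + 1) * (m ^ k - 1)"
    using assms by (cases k) (simp_all add: F_def algebra_simps)
  moreover have "m - 1 dvd m ^ k - 1"
    by (simp add: power_diff_1_eq)
  ultimately show ?thesis
    by simp
qed

lemma F_root_le:
  assumes "F k m = 0" "k \<ge> 1" "m \<ge> 2"
  shows "m \<le> int k + 4"
proof -
  have "m - 1 dvd int k + 3"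
    using dvd_F_add[of k m] assms by simp
  then show ?thesis
    using zdvd_imp_le by fastforce
qed

lemma binomial_three_terms_le:
  fixes x :: "'a::linordered_idom"
  assumes "x \<ge> 0"
  shows "x ^ k * (2 * x\<^sup>2 + 2 * of_nat k * x + of_nat k * (of_nat k - 1)) \<le> 2 * x\<^sup>2 * (x + 1) ^ k"
proof (induction k)
  case 0
  then show ?case by simp
next
  case (Suc k)
  have "x ^ Suc k * (2 * x\<^sup>2 + 2 * of_nat (Suc k) * x + of_nat (Suc k) * (of_nat (Suc k) - 1))
      = (x + 1) * (x ^ k * (2 * x\<^sup>2 + 2 * of_nat k * x + of_nat k * (of_nat k - 1)))
        - x ^ k * (of_nat k * (of_nat k - 1))"
    by (simp add: algebra_simps power2_eq_square)
  also have "\<dots> \<le> (x + 1) * (x ^ k * (2 * x\<^sup>2 + 2 * of_nat k * x + of_nat k * (of_nat k - 1)))"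
    using assms by (cases k) auto
  also have "\<dots> \<le> (x + 1) * (2 * x\<^sup>2 * (x + 1) ^ k)"
    using Suc assms by (intro mult_left_mono) auto
  finally show ?case
    by (simp add: algebra_simps)
qed

lemma large_k_cubic_ineq:
  fixes k n :: int
  assumes "k \<ge> 9" "0 \<le> n" "n \<le> k + 3"
  shows "4 * n ^ 3 + 2 * (k + 1) * n\<^sup>2 + 2 * (k - 1) < 2 * (k + 1) * (2 * n\<^sup>2 + 2 * k * n + k * (k - 1))"
proof -
  \<comment> \<open>nonnegative products that make the claim linear in the monomials of \<open>k\<close> and \<open>n\<close>\<close>
  have "0 \<le> (k + 3 - n) * n\<^sup>2" "0 \<le> (k + 5) * (k + 3 - n) * n"
       "0 \<le> (k - 9) * k * n" "0 \<le> (k - 5) * n"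
    using assms by simp_all
  moreover have "0 < (k - 1) * (k\<^sup>2 + k - 1)"
    using assms zero_le_power2[of k] by (intro mult_pos_pos) linarith+
  ultimately show ?thesis
    by (simp add: algebra_simps power2_eq_square power3_eq_cube)
qed

lemma F_neg_large:
  assumes "k \<ge> 9" "m \<ge> 3" "m \<le> int k + 4"
  shows "F k m < 0"
proof -
  define n where "n = m - 1"
  define R where "R = 2 * (int k + 1) * (n + 1) ^ k"
  have n: "2 \<le> n" "n \<le> int k + 3" and m: "m = n + 1"
    using assms by (simp_all add: n_def)
  have "n\<^sup>2 \<le> n ^ k"
    using n assms by (intro power_increasing) auto
  then have "n\<^sup>2 * (2 * (int k - 1)) \<le> n ^ k * (2 * (int k - 1))"
    using assms by (intro mult_right_mono) auto
  then have "2 * n\<^sup>2 * (F k m + R) \<le> n ^ k * (4 * n ^ 3 + 2 * (int k + 1) * n\<^sup>2 + 2 * (int k - 1))"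
    by (simp add: F_def R_def m algebra_simps power2_eq_square power3_eq_cube)
  also have "\<dots> < n ^ k * (2 * (int k + 1) * (2 * n\<^sup>2 + 2 * int k * n + int k * (int k - 1)))"
    using n assms large_k_cubic_ineq[of "int k" n] by (intro mult_strict_left_mono) auto
  also have "\<dots> = 2 * (int k + 1) * (n ^ k * (2 * n\<^sup>2 + 2 * int k * n + int k * (int k - 1)))"
    by (simp add: algebra_simps)
  also have "\<dots> \<le> 2 * (int k + 1) * (2 * n\<^sup>2 * (n + 1) ^ k)"
    using binomial_three_terms_le[of n k] n by (intro mult_left_mono) auto
  also have "\<dots> = 2 * n\<^sup>2 * R"
    by (simp add: R_def)
  finally show ?thesis
    using n by (simp add: mult_less_cancel_left)
qed

lemma F_ne_0_small:
  assumes "k \<in> {2..8}" "m \<in> {3..12}"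
  shows "F k m \<noteq> 0"
proof -
  have "k \<in> {2, 3, 4, 5, 6, 7, 8}" "m \<in> {3, 4, 5, 6, 7, 8, 9, 10, 11, 12}"
    using assms by (auto, presburger)
  then show ?thesis
    by (auto simp: F_def)
qed

theorem mainTheorem12:
  fixes k :: nat and m :: int
  assumes "k \<ge> 2" and "m \<ge> 3"
  shows "S_R (real_of_int m - 1) k \<noteq> (real_of_int m) ^ k"
proof
  assume "S_R (real_of_int m - 1) k = (real_of_int m) ^ k"
  then have root: "F k m = 0"
    using of_int_F[of k m] by simp
  then have "m \<le> int k + 4"
    using F_root_le assms by simp
  then show False
    using root assms F_neg_large[of k m] F_ne_0_small[of k m] by fastforce
qed

end
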